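(* Let $(p_n)_{n\ge1}$ be a sequence in $[0,1]$ with $p_n \gg \frac{1}{n^3}$, i.e. $\lim_{n\to\infty} n^3 p_n = \infty$. Let $G_n$ be the Erdős–Rényi random graph on the vertex set $\mathcal C^0_n$ (with $N_n=|\mathcal C^0_n|$ vertices) with edge probability $p_n$, and let $R_n$ be the reaction network associated to $G_n$. Then \[ \lim_{n\to\infty}\mathbb P(\delta_{R_n}=0)=0 . \]
   Context: A reaction network on species $S_1,\dots,S_n$ consists of a finite set $\mathcal R$ of reactions $y\to y'$ where $y\neq y'$ are complexes, i.e. vectors in $\mathbb Z^n_{\ge0}$; $\mathcal C$ is the set of complexes appearing in some reaction. Its graph has vertex set $\mathcal C$ and a directed edge $y\to y'$ for each reaction; $\ell$ denotes the number of connected components of this graph (ignoring edge directions), $s=\dim\operatorname{span}\{y'-y: y\to y'\in\mathcal R\}$, and the deficiency is $\delta=|\mathcal C|-\ell-s$ (the empty network, with no reactions, has $\delta=0$). Let $e_i$ be the $i$-th standard basis vector of $\mathbb Z^n$ and $\mathcal C^0_n=\{0\}\cup\{e_i:1\le i\le n\}\cup\{e_i+e_j:1\le i\le j\le n\}$, so $N_n=|\mathcal C^0_n|=\frac{n^2+3n+2}{2}$. $G_n$ is the Erdős–Rényi random graph on vertex set $\mathcal C^0_n$ in which each of the $\binom{N_n}{2}$ possible undirected edges is present independently with probability $p_n$. The associated reaction network $R_n$ has species $S_1,\dots,S_n$, complex set equal to the set of vertices of $G_n$ of positive degree, and for each edge $\{y,y'\}$ of $G_n$ the two reactions $y\to y'$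 and $y'\to y$. $\delta_{R_n}$ denotes the deficiency of $R_n$. *)

theory Defs
  imports Complex_Main "HOL-Library.Function_Algebras"
begin

text \<open>Complexes are vectors in Z^n_{>=0}, represented as functions nat => nat with
  support in {0..<n} (coordinate i stands for species S_(i+1)).\<close>
type_synonym complex_vec = "nat \<Rightarrow> nat"

text \<open>The complex set C^0_n: 0, e_i, and e_i + e_j (i <= j), i.e. all vectors
  supported on the first n coordinates with total degree at most 2.\<close>
definition C0 :: "nat \<Rightarrow> complex_vec set" where
  "C0 n = {y. (\<forall>i\<ge>n. y i = 0) \<and> (\<Sum>i<n. y i) \<le> 2}"

definition possible_edges :: "nat \<Rightarrow> complex_vec set set" where
  "possible_edges n = {{x, y} | x y. x \<in> C0 n \<and> y \<in> C0 n \<and> x \<noteq> y}"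

definition net_complexes :: "complex_vec set set \<Rightarrow> complex_vec set" where
  "net_complexes E = \<Union>E"

definition net_reactions :: "complex_vec set set \<Rightarrow> (complex_vec \<times> complex_vec) set" where
  "net_reactions E = {(y, y'). {y, y'} \<in> E \<and> y \<noteq> y'}"

definition net_linkage_classes :: "complex_vec set set \<Rightarrow> nat" where
  "net_linkage_classes E =
     card (net_complexes E // ((net_reactions E \<union> (net_reactions E)\<inverse>)\<^sup>*))"

definition reaction_vector :: "complex_vec \<Rightarrow> complex_vec \<Rightarrow> (nat \<Rightarrow> real)" where
  "reaction_vector y y' = (\<lambda>i. real (y' i) - real (y i))"

definition fscale :: "real \<Rightarrow> (nat \<Rightarrow> real) \<Rightarrow> (nat \<Rightarrow> real)" where
  "fscale c v = (\<lambda>i. c * v i)"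

definition net_stoich_dim :: "complex_vec set set \<Rightarrow> nat" where
  "net_stoich_dim E =
     vector_space.dim fscale {reaction_vector y y' | y y'. (y, y') \<in> net_reactions E}"

definition deficiency :: "complex_vec set set \<Rightarrow> int" where
  "deficiency E = int (card (net_complexes E)) - int (net_linkage_classes E) - int (net_stoich_dim E)"

definition er_prob :: "nat \<Rightarrow> real \<Rightarrow> complex_vec set set \<Rightarrow> real" where
  "er_prob n p E = p ^ card E * (1 - p) ^ (card (possible_edges n) - card E)"

definition prob_deficiency_zero :: "nat \<Rightarrow> real \<Rightarrow> real" where
  "prob_deficiency_zero n p =
     (\<Sum>E\<in>Pow (possible_edges n). if deficiency E = 0 then er_prob n p E else 0)"

end

theory Submission
  imports Defs "HOL-Library.Disjoint_Sets"
begin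

(*
  If A and B are disjoint sets of complexes and T is the set of complexes in B adjacent to A,
  then every linkage class meets C - T, so l <= |C| - |T|; together with s <= n, deficiency
  zero forces |T| <= n.  For m = n div 3 take A and B to be the m^2 complexes e_i + e_j with
  i < m <= j < 2m, respectively i < m, 2m <= j < 3m.  The stars joining the points of B to A are
  disjoint, so the events "b is adjacent to A" are independent of probability
  1 - (1 - p)^(m^2), and the exponential Markov inequality gives
  P(|T| <= n) <= 2^n E[2^(-|T|)] = 2^n ((1 + (1 - p)^(m^2)) / 2)^(m^2),
  which is at most (2 / e^2)^n as soon as n^3 p is large.
*)

interpretation real_fun: vector_space fscale
  by unfold_locales (auto simp: fscale_def fun_eq_iff algebra_simps)

lemma sum_fun_apply:
  fixes f :: "'a \<Rightarrow> 'b \<Rightarrow> 'c::comm_monoid_add"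
  shows "finite A \<Longrightarrow> (\<Sum>a\<in>A. f a) x = (\<Sum>a\<in>A. f a x)"
  by (induction A rule: finite_induct) auto

lemma real_fun_dim_le_if_vanishing_from:
  assumes "\<forall>v\<in>S. \<forall>i\<ge>n. v i = 0"
  shows "real_fun.dim S \<le> n"
proof -
  define unit :: "nat \<Rightarrow> nat \<Rightarrow> real" where "unit i = (\<lambda>k. if k = i then 1 else 0)" for i
  have "v \<in> real_fun.span (unit ` {..<n})" if "v \<in> S" for v
  proof -
    have "v = (\<Sum>i<n. fscale (v i) (unit i))"
    proof
      fix k
      have "(\<Sum>i<n. fscale (v i) (unit i)) k = (\<Sum>i<n. if k = i then v i else 0)"
        by (simp add: sum_fun_apply fscale_def unit_def if_distrib cong: if_cong)
      then show "v k = (\<Sum>i<n. fscale (v i) (unit i)) k"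
        using assms that by (cases "k < n") auto
    qed
    also have "\<dots> \<in> real_fun.span (unit ` {..<n})"
      by (intro real_fun.span_sum real_fun.span_scale real_fun.span_base) auto
    finally show ?thesis .
  qed
  then have "real_fun.dim S \<le> card (unit ` {..<n})"
    by (intro real_fun.dim_le_card) auto
  also have "\<dots> \<le> n"
    using card_image_le[of "{..<n}" unit] by simp
  finally show ?thesis .
qed

lemma finite_C0: "finite (C0 n)"
proof (rule finite_subset[OF _ finite_set_of_finite_funs[of "{..<n}" "{..2}" 0]])
  have "y i \<le> 2" if "y \<in> C0 n" "i < n" for y i
    using that member_le_sum[of i "{..<n}" y] by (auto simp: C0_def)
  then show "C0 n \<subseteq> {f. \<forall>x. (x \<in> {..<n} \<longrightarrow> f x \<in> {..2}) \<and> (x \<notin> {..<n} \<longrightarrow> f x = 0)}"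
    unfolding C0_def by (simp add: subset_iff not_less)
qed simp_all

lemma finite_possible_edges: "finite (possible_edges n)"
  using finite_subset[of "possible_edges n" "Pow (C0 n)"] finite_C0
  by (auto simp: possible_edges_def)

lemma finite_net_complexes:
  assumes "E \<subseteq> possible_edges n"
  shows "finite (net_complexes E)"
proof -
  have "net_complexes E \<subseteq> C0 n"
    using assms by (auto simp: net_complexes_def possible_edges_def)
  then show ?thesis
    using finite_C0 finite_subset by blast
qed

lemma net_stoich_dim_le:
  assumes "E \<subseteq> possible_edges n"
  shows "net_stoich_dim E \<le> n"
  unfolding net_stoich_dim_def
proof (rule real_fun_dim_le_if_vanishing_from, safe)
  fix y y' i
  assume "(y, y') \<in> net_reactions E" and "n \<le> i"
  moreover from this have "y \<in> C0 n" "y' \<in> C0 n"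
    using assms by (auto simp: net_reactions_def possible_edges_def doubleton_eq_iff)
  ultimately show "reaction_vector y y' i = 0"
    by (auto simp: C0_def reaction_vector_def)
qed

lemma net_linkage_classes_add_card_adjacent_le:
  assumes fin: "finite (net_complexes E)" and AB: "A \<inter> B = {}"
  shows "net_linkage_classes E + card {b\<in>B. \<exists>a\<in>A. {a, b} \<in> E} \<le> card (net_complexes E)"
proof -
  let ?T = "{b\<in>B. \<exists>a\<in>A. {a, b} \<in> E}"
  let ?C = "net_complexes E"
  let ?r = "net_reactions E"
  let ?R = "(?r \<union> ?r\<inverse>)\<^sup>*"
  have TC: "?T \<subseteq> ?C"
    by (auto simp: net_complexes_def)
  have equiv: "equiv UNIV ?R"
    by (auto simp: equiv_def refl_on_def sym_rtrancl sym_Un_converse intro: trans_rtrancl)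
  have "?C // ?R \<subseteq> (\<lambda>x. ?R``{x}) ` (?C - ?T)"
  proof
    fix X assume "X \<in> ?C // ?R"
    then obtain x where x: "x \<in> ?C" "X = ?R``{x}"
      by (auto simp: quotient_def)
    show "X \<in> (\<lambda>x. ?R``{x}) ` (?C - ?T)"
    proof (cases "x \<in> ?T")
      case True
      then obtain a where a: "a \<in> A" "{a, x} \<in> E" "x \<in> B"
        by blast
      with AB have "(x, a) \<in> ?r"
        by (auto simp: net_reactions_def insert_commute)
      then have "?R``{x} = ?R``{a}"
        using equiv by (intro equiv_class_eq) auto
      moreover have "a \<in> ?C - ?T"
        using a AB by (auto simp: net_complexes_def)
      ultimately show ?thesis
        using x by blast
    qed (use x in blast)
  qed
  then have "net_linkage_classes E \<le> card ((\<lambda>x. ?R``{x}) ` (?C - ?T))"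
    unfolding net_linkage_classes_def using fin by (intro card_mono) auto
  also have "\<dots> \<le> card (?C - ?T)"
    by (rule card_image_le) (use fin in auto)
  also have "\<dots> = card ?C - card ?T"
    using TC fin by (simp add: card_Diff_subset finite_subset)
  finally show ?thesis
    using card_mono[OF fin TC] by linarith
qed

lemma card_adjacent_le_if_deficiency_zero:
  assumes "E \<subseteq> possible_edges n" "A \<inter> B = {}" "deficiency E = 0"
  shows "card {b\<in>B. \<exists>a\<in>A. {a, b} \<in> E} \<le> n"
proof -
  have "net_linkage_classes E + card {b\<in>B. \<exists>a\<in>A. {a, b} \<in> E} \<le> card (net_complexes E)"
    using net_linkage_classes_add_card_adjacent_le[OF finite_net_complexes] assms by blast
  moreover have "net_stoich_dim E \<le> n"
    using net_stoich_dim_le assms(1) by blast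
  ultimately show ?thesis
    using assms(3) unfolding deficiency_def by linarith
qed

definition random_subset_prob :: "'a set \<Rightarrow> real \<Rightarrow> 'a set \<Rightarrow> real" where
  "random_subset_prob P p E = p ^ card E * (1 - p) ^ (card P - card E)"

lemma random_subset_prob_nonneg:
  "0 \<le> p \<Longrightarrow> p \<le> 1 \<Longrightarrow> 0 \<le> random_subset_prob P p E"
  by (simp add: random_subset_prob_def)

lemma random_subset_prob_Un:
  assumes "finite P" "finite Q" "P \<inter> Q = {}" "S \<subseteq> P" "T \<subseteq> Q"
  shows "random_subset_prob (P \<union> Q) p (S \<union> T) = random_subset_prob P p S * random_subset_prob Q p T"
proof -
  have "finite S" "finite T" "S \<inter> T = {}"
    using assms finite_subset by blast+
  then have "card (S \<union> T) = card S + card T"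
    by (rule card_Un_disjoint)
  moreover have "card (P \<union> Q) = card P + card Q"
    using assms(1-3) by (rule card_Un_disjoint)
  moreover have "card S \<le> card P" "card T \<le> card Q"
    using assms by (simp_all add: card_mono)
  ultimately have "card (P \<union> Q) - card (S \<union> T) = (card P - card S) + (card Q - card T)"
    by linarith
  with \<open>card (S \<union> T) = card S + card T\<close> show ?thesis
    by (simp add: random_subset_prob_def power_add)
qed

lemma sum_Pow_Un_disjoint:
  assumes "P \<inter> Q = {}"
  shows "(\<Sum>E\<in>Pow (P \<union> Q). F (E \<inter> P) (E \<inter> Q)) = (\<Sum>S\<in>Pow P. \<Sum>T\<in>Pow Q. F S T)"
proof -
  have "(\<Sum>S\<in>Pow P. \<Sum>T\<in>Pow Q. F S T) = (\<Sum>(S, T)\<in>Pow P \<times> Pow Q. F S T)"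
    by (rule sum.cartesian_product)
  also have "\<dots> = (\<Sum>E\<in>Pow (P \<union> Q). F (E \<inter> P) (E \<inter> Q))"
    by (rule sum.reindex_bij_witness[where i = "\<lambda>E. (E \<inter> P, E \<inter> Q)" and j = "\<lambda>(S, T). S \<union> T"])
       (use assms in \<open>auto intro!: arg_cong2[where f = F]\<close>)
  finally show ?thesis ..
qed

lemma sum_random_subset_prob_Un:
  assumes "finite P" "finite Q" "P \<inter> Q = {}"
  shows "(\<Sum>E\<in>Pow (P \<union> Q). random_subset_prob (P \<union> Q) p E * (f (E \<inter> P) * g (E \<inter> Q)))
       = (\<Sum>S\<in>Pow P. random_subset_prob P p S * f S) * (\<Sum>T\<in>Pow Q. random_subset_prob Q p T * g T)"
proof -
  have split: "random_subset_prob (P \<union> Q) p E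
      = random_subset_prob P p (E \<inter> P) * random_subset_prob Q p (E \<inter> Q)" if "E \<subseteq> P \<union> Q" for E
  proof -
    have "E = (E \<inter> P) \<union> (E \<inter> Q)"
      using that by blast
    then show ?thesis
      using random_subset_prob_Un[OF assms, of "E \<inter> P" "E \<inter> Q" p] by simp
  qed
  have "(\<Sum>E\<in>Pow (P \<union> Q). random_subset_prob (P \<union> Q) p E * (f (E \<inter> P) * g (E \<inter> Q)))
      = (\<Sum>E\<in>Pow (P \<union> Q). (random_subset_prob P p (E \<inter> P) * f (E \<inter> P))
                            * (random_subset_prob Q p (E \<inter> Q) * g (E \<inter> Q)))"
    by (intro sum.cong) (simp_all add: split mult_ac)
  also have "\<dots> = (\<Sum>S\<in>Pow P. \<Sum>T\<in>Pow Q. (random_subset_prob P p S * f S) * (random_subset_prob Q p T * g T))"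
    by (rule sum_Pow_Un_disjoint[OF assms(3)])
  also have "\<dots> = (\<Sum>S\<in>Pow P. random_subset_prob P p S * f S) * (\<Sum>T\<in>Pow Q. random_subset_prob Q p T * g T)"
    by (rule sum_product[symmetric])
  finally show ?thesis .
qed

lemma sum_random_subset_prob: "finite P \<Longrightarrow> (\<Sum>E\<in>Pow P. random_subset_prob P p E) = 1"
proof (induction P rule: finite_induct)
  case empty
  then show ?case by (simp add: random_subset_prob_def)
next
  case (insert x P)
  have "Pow {x} = {{}, {x}}"
    by blast
  then have "(\<Sum>S\<in>Pow {x}. random_subset_prob {x} p S) = 1"
    by (simp add: random_subset_prob_def)
  then show ?case
    using sum_random_subset_prob_Un[of "{x}" P p "\<lambda>_. 1" "\<lambda>_. 1"] insert by simp
qed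

lemma sum_random_subset_prob_prod_disjoint:
  assumes "finite B" "finite P" "\<And>b. b \<in> B \<Longrightarrow> G b \<subseteq> P" "disjoint_family_on G B"
  shows "(\<Sum>E\<in>Pow P. random_subset_prob P p E * (\<Prod>b\<in>B. h b (E \<inter> G b)))
       = (\<Prod>b\<in>B. \<Sum>S\<in>Pow (G b). random_subset_prob (G b) p S * h b S)"
  using assms
proof (induction B arbitrary: P rule: finite_induct)
  case empty
  then show ?case by (simp add: sum_random_subset_prob)
next
  case (insert b B)
  define Q where "Q = P - G b"
  have fin: "finite (G b)" "finite Q"
    using insert.prems(1) insert.prems(2)[of b] finite_subset unfolding Q_def by auto
  have P: "P = G b \<union> Q"
    using insert.prems(2) unfolding Q_def by blast
  have GQ: "G b' \<subseteq> Q" if "b' \<in> B" for b'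
  proof -
    have "G b \<inter> G b' = {}"
      using disjoint_family_onD[OF insert.prems(3), of b b'] that insert.hyps(2) by auto
    then show ?thesis
      using insert.prems(2)[of b'] that unfolding Q_def by blast
  qed
  have "(\<Sum>E\<in>Pow P. random_subset_prob P p E * (\<Prod>b'\<in>insert b B. h b' (E \<inter> G b')))
      = (\<Sum>E\<in>Pow (G b \<union> Q). random_subset_prob (G b \<union> Q) p E
                             * (h b (E \<inter> G b) * (\<Prod>b'\<in>B. h b' ((E \<inter> Q) \<inter> G b'))))"
  proof (rule sum.cong)
    fix E
    have "(\<Prod>b'\<in>B. h b' (E \<inter> G b')) = (\<Prod>b'\<in>B. h b' ((E \<inter> Q) \<inter> G b'))"
      using GQ by (intro prod.cong) (simp_all add: Int_absorb1 Int_assoc)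
    then show "random_subset_prob P p E * (\<Prod>b'\<in>insert b B. h b' (E \<inter> G b'))
        = random_subset_prob (G b \<union> Q) p E * (h b (E \<inter> G b) * (\<Prod>b'\<in>B. h b' ((E \<inter> Q) \<inter> G b')))"
      using insert.hyps by (simp flip: P)
  qed (simp flip: P)
  also have "\<dots> = (\<Sum>S\<in>Pow (G b). random_subset_prob (G b) p S * h b S)
                * (\<Sum>T\<in>Pow Q. random_subset_prob Q p T * (\<Prod>b'\<in>B. h b' (T \<inter> G b')))"
    by (rule sum_random_subset_prob_Un[OF fin]) (simp add: Q_def)
  also have "(\<Sum>T\<in>Pow Q. random_subset_prob Q p T * (\<Prod>b'\<in>B. h b' (T \<inter> G b')))
      = (\<Prod>b'\<in>B. \<Sum>S\<in>Pow (G b'). random_subset_prob (G b') p S * h b' S)"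
    using insert.prems GQ by (intro insert.IH[OF fin(2)]) (auto intro: disjoint_family_on_mono)
  finally show ?case
    using insert.hyps by simp
qed

lemma sum_random_subset_prob_half_if_nonempty:
  assumes "finite G"
  shows "(\<Sum>S\<in>Pow G. random_subset_prob G p S * (if S = {} then 1 else 1/2)) = (1 + (1 - p) ^ card G) / 2"
proof -
  have "(\<Sum>S\<in>Pow G. random_subset_prob G p S * (if S = {} then 1 else 1/2))
      = (\<Sum>S\<in>Pow G. random_subset_prob G p S / 2 + (if S = {} then random_subset_prob G p S / 2 else 0))"
    by (rule sum.cong) auto
  also have "\<dots> = (\<Sum>S\<in>Pow G. random_subset_prob G p S) / 2 + random_subset_prob G p {} / 2"
    using assms by (simp add: sum.distrib sum_divide_distrib[symmetric])
  also have "\<dots> = (1 + (1 - p) ^ card G) / 2"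
    using sum_random_subset_prob[OF assms] by (simp add: random_subset_prob_def)
  finally show ?thesis .
qed

lemma deficiency_zero_indicator_le:
  assumes "E \<subseteq> possible_edges n" "A \<inter> B = {}"
  shows "(if deficiency E = 0 then 1 else 0) \<le> 2 ^ n * (1/2::real) ^ card {b\<in>B. \<exists>a\<in>A. {a, b} \<in> E}"
proof (cases "deficiency E = 0")
  case True
  then have "(1/2::real) ^ n \<le> (1/2) ^ card {b\<in>B. \<exists>a\<in>A. {a, b} \<in> E}"
    using card_adjacent_le_if_deficiency_zero[OF assms] by (intro power_decreasing) auto
  with True show ?thesis
    by (simp add: power_one_over field_simps)
qed simp

definition star_edges :: "'a set \<Rightarrow> 'a \<Rightarrow> 'a set set" where
  "star_edges A b = (\<lambda>a. {a, b}) ` A"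

lemma card_star_edges: "b \<notin> A \<Longrightarrow> card (star_edges A b) = card A"
  unfolding star_edges_def by (intro card_image inj_onI) (auto simp: doubleton_eq_iff)

lemma disjoint_family_on_star_edges: "A \<inter> B = {} \<Longrightarrow> disjoint_family_on (star_edges A) B"
  unfolding disjoint_family_on_def star_edges_def by (auto simp: doubleton_eq_iff)

lemma star_edges_subset_possible_edges:
  "A \<subseteq> C0 n \<Longrightarrow> b \<in> C0 n \<Longrightarrow> b \<notin> A \<Longrightarrow> star_edges A b \<subseteq> possible_edges n"
  unfolding star_edges_def possible_edges_def by blast

lemma prob_deficiency_zero_le:
  assumes p: "0 \<le> p" "p \<le> 1" and A: "A \<subseteq> C0 n" and B: "B \<subseteq> C0 n" and AB: "A \<inter> B = {}"
  shows "prob_deficiency_zero n p \<le> 2 ^ n * ((1 + (1 - p) ^ card A) / 2) ^ card B"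
proof -
  let ?P = "possible_edges n"
  let ?G = "star_edges A"
  define h :: "complex_vec set set \<Rightarrow> real" where "h S = (if S = {} then 1 else 1/2)" for S
  have finB: "finite B"
    using B finite_C0 finite_subset by blast
  have G_sub: "?G b \<subseteq> ?P" if "b \<in> B" for b
    using A B AB that by (intro star_edges_subset_possible_edges) auto
  have prod_h: "(\<Prod>b\<in>B. h (E \<inter> ?G b)) = (1/2) ^ card {b\<in>B. \<exists>a\<in>A. {a, b} \<in> E}" for E
  proof -
    have "{b\<in>B. \<exists>a\<in>A. {a, b} \<in> E} = B \<inter> - {b. E \<inter> ?G b = {}}"
      unfolding star_edges_def by blast
    then show ?thesis
      unfolding h_def using prod.If_cases[OF finB, of "\<lambda>b. E \<inter> ?G b = {}" "\<lambda>_. 1" "\<lambda>_. 1/2"] by simp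
  qed
  have "prob_deficiency_zero n p
      = (\<Sum>E\<in>Pow ?P. random_subset_prob ?P p E * (if deficiency E = 0 then 1 else 0))"
    unfolding prob_deficiency_zero_def er_prob_def random_subset_prob_def by (intro sum.cong) auto
  also have "\<dots> \<le> (\<Sum>E\<in>Pow ?P. random_subset_prob ?P p E * (2 ^ n * (\<Prod>b\<in>B. h (E \<inter> ?G b))))"
    unfolding prod_h using deficiency_zero_indicator_le[OF _ AB] random_subset_prob_nonneg[OF p]
    by (intro sum_mono mult_left_mono) auto
  also have "\<dots> = 2 ^ n * (\<Sum>E\<in>Pow ?P. random_subset_prob ?P p E * (\<Prod>b\<in>B. h (E \<inter> ?G b)))"
    by (simp add: sum_distrib_left mult_ac)
  also have "\<dots> = 2 ^ n * (\<Prod>b\<in>B. \<Sum>S\<in>Pow (?G b). random_subset_prob (?G b) p S * h S)"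
    using sum_random_subset_prob_prod_disjoint[OF finB finite_possible_edges G_sub
        disjoint_family_on_star_edges[OF AB]]
    by simp
  also have "\<dots> = 2 ^ n * (\<Prod>b\<in>B. (1 + (1 - p) ^ card A) / 2)"
  proof -
    have "(\<Sum>S\<in>Pow (?G b). random_subset_prob (?G b) p S * h S) = (1 + (1 - p) ^ card A) / 2"
      if "b \<in> B" for b
    proof -
      have "b \<notin> A"
        using AB that by blast
      then show ?thesis
        using finite_subset[OF G_sub[OF that] finite_possible_edges]
        by (simp add: h_def sum_random_subset_prob_half_if_nonempty card_star_edges)
    qed
    then show ?thesis
      by (metis (no_types, lifting) prod.cong)
  qed
  also have "\<dots> = 2 ^ n * ((1 + (1 - p) ^ card A) / 2) ^ card B"
    by simp
  finally show ?thesis .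
qed

definition pair_complex :: "nat \<Rightarrow> nat \<Rightarrow> complex_vec" where
  "pair_complex i j = (\<lambda>k. of_bool (k = i) + of_bool (k = j))"

definition pair_block :: "nat set \<Rightarrow> nat set \<Rightarrow> complex_vec set" where
  "pair_block I J = (\<lambda>(i, j). pair_complex i j) ` (I \<times> J)"

lemma pair_complex_in_C0: "i < n \<Longrightarrow> j < n \<Longrightarrow> pair_complex i j \<in> C0 n"
  by (simp add: C0_def pair_complex_def sum.distrib)

lemma pair_complex_eqD:
  assumes "pair_complex i j = pair_complex i' j'"
  shows "(i = i' \<and> j = j') \<or> (i = j' \<and> j = i')"
proof -
  have "pair_complex i j k \<noteq> 0 \<longleftrightarrow> k = i \<or> k = j" for i j k
    by (simp add: pair_complex_def)
  then have "k = i \<or> k = j \<longleftrightarrow> k = i' \<or> k = j'" for k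
    using assms by metis
  from this[of i] this[of j] this[of i'] this[of j'] show ?thesis
    by blast
qed

lemma card_pair_block:
  assumes "finite I" "finite J" "I \<inter> J = {}"
  shows "card (pair_block I J) = card I * card J"
proof -
  have "inj_on (\<lambda>(i, j). pair_complex i j) (I \<times> J)"
    using assms(3) by (auto intro!: inj_onI dest: pair_complex_eqD)
  then show ?thesis
    unfolding pair_block_def by (simp add: card_image card_cartesian_product)
qed

lemma pair_block_subset_C0:
  assumes "I \<subseteq> {..<n}" "J \<subseteq> {..<n}"
  shows "pair_block I J \<subseteq> C0 n"
proof
  fix y
  assume "y \<in> pair_block I J"
  then obtain i j where "i \<in> I" "j \<in> J" "y = pair_complex i j"
    unfolding pair_block_def by auto
  with assms show "y \<in> C0 n"
    by (simp add: pair_complex_in_C0 subset_iff)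
qed

lemma pair_block_disjoint:
  "I \<inter> K = {} \<Longrightarrow> J \<inter> K = {} \<Longrightarrow> pair_block I J \<inter> pair_block I K = {}"
  unfolding pair_block_def by (auto dest: pair_complex_eqD)

lemma min_le_one_minus_power:
  fixes p :: real
  assumes "0 \<le> p" "p \<le> 1"
  shows "min (1/2) (real a * p / 2) \<le> 1 - (1 - p) ^ a"
proof -
  define r where "r = (1 - p) ^ a"
  have r: "0 \<le> r" "r \<le> 1"
    using assms by (simp_all add: r_def power_le_one)
  then have "r * (1 + real a * p) \<le> r * (1 + p) ^ a"
    using Bernoulli_inequality[of p a] assms by (intro mult_left_mono) auto
  also have "\<dots> = (1 - p * p) ^ a"
    by (simp add: r_def power_mult_distrib[symmetric] algebra_simps)
  also have "\<dots> \<le> 1"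
    using assms by (intro power_le_one) (auto simp: mult_le_one)
  finally have key: "real a * p \<le> (1 - r) * (1 + real a * p)"
    by (simp add: algebra_simps)
  show ?thesis
  proof (cases "real a * p \<le> 1")
    case True
    then have "(1 - r) * (1 + real a * p) \<le> (1 - r) * 2"
      using r by (intro mult_left_mono) simp_all
    with key have "real a * p \<le> (1 - r) * 2"
      by (rule order_trans)
    then have "real a * p / 2 \<le> 1 - r"
      by simp
    then show ?thesis
      by (simp add: r_def)
  next
    case False
    then have "(1 - r) * (1 + real a * p) \<le> (1 - r) * (2 * (real a * p))"
      using r by (intro mult_left_mono) linarith+
    with key have "real a * p * 1 \<le> real a * p * (2 * (1 - r))"
      by (simp add: mult_ac)
    moreover have "0 < real a * p"
      using False by linarith
    ultimately have "1 \<le> 2 * (1 - r)"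
      by (simp only: mult_le_cancel_left_pos)
    then show ?thesis
      by (simp add: r_def)
  qed
qed

lemma power_half_one_plus_le_exp:
  fixes r :: real
  assumes "-1 \<le> r"
  shows "((1 + r) / 2) ^ a \<le> exp (real a * (r - 1) / 2)"
proof -
  have "(1 + r) / 2 = 1 + (r - 1) / 2"
    by (simp add: field_simps)
  also have "\<dots> \<le> exp ((r - 1) / 2)"
    by (rule exp_ge_add_one_self)
  finally have "((1 + r) / 2) ^ a \<le> exp ((r - 1) / 2) ^ a"
    using assms by (intro power_mono) simp_all
  also have "\<dots> = exp (real a * (r - 1) / 2)"
    by (simp add: exp_of_nat_mult[symmetric])
  finally show ?thesis .
qed

lemma C0_disjoint_subsets:
  obtains A B where "A \<subseteq> C0 n" "B \<subseteq> C0 n" "A \<inter> B = {}" "card A = (n div 3)\<^sup>2" "card B = (n div 3)\<^sup>2"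
proof -
  define m where "m = n div 3"
  let ?I = "{..<m}" and ?J = "{m..<2 * m}" and ?K = "{2 * m..<3 * m}"
  have "3 * m \<le> n"
    by (simp add: m_def)
  then have sub: "?I \<subseteq> {..<n}" "?J \<subseteq> {..<n}" "?K \<subseteq> {..<n}"
    by auto
  have disj: "?I \<inter> ?J = {}" "?I \<inter> ?K = {}" "?J \<inter> ?K = {}"
    by auto
  show ?thesis
  proof (rule that)
    show "pair_block ?I ?J \<subseteq> C0 n" "pair_block ?I ?K \<subseteq> C0 n"
      using sub by (simp_all add: pair_block_subset_C0)
    show "pair_block ?I ?J \<inter> pair_block ?I ?K = {}"
      using disj by (intro pair_block_disjoint)
    show "card (pair_block ?I ?J) = (n div 3)\<^sup>2" "card (pair_block ?I ?K) = (n div 3)\<^sup>2"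
      using disj by (simp_all add: card_pair_block m_def power2_eq_square)
  qed
qed

lemma prob_deficiency_zero_nonneg: "0 \<le> p \<Longrightarrow> p \<le> 1 \<Longrightarrow> 0 \<le> prob_deficiency_zero n p"
  unfolding prob_deficiency_zero_def er_prob_def by (intro sum_nonneg) auto

lemma mult_one_minus_power_ge:
  fixes p :: real
  assumes p: "0 \<le> p" "p \<le> 1" and n: "128 \<le> n" and np: "2048 \<le> real n ^ 3 * p"
    and a: "(real n / 4)\<^sup>2 \<le> real a"
  shows "4 * real n \<le> real a * (1 - (1 - p) ^ a)"
proof -
  have "128 * real n \<le> real n * real n"
    using n by (intro mult_right_mono) auto
  with a have "4 * real n \<le> real a / 2"
    by (simp add: power2_eq_square)
  moreover have "4 * real n \<le> real a * (real a * p / 2)"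
  proof -
    have "4 * real n = real n * 2048 / 512"
      by simp
    also have "\<dots> \<le> real n * (real n ^ 3 * p) / 512"
      using np by (intro divide_right_mono mult_left_mono) auto
    also have "\<dots> = ((real n / 4)\<^sup>2)\<^sup>2 * p / 2"
      by (simp add: power2_eq_square power3_eq_cube)
    also have "\<dots> \<le> (real a)\<^sup>2 * p / 2"
      using a p by (intro divide_right_mono mult_right_mono power_mono) auto
    also have "\<dots> = real a * (real a * p / 2)"
      by (simp add: power2_eq_square)
    finally show ?thesis .
  qed
  ultimately have "4 * real n \<le> real a * min (1/2) (real a * p / 2)"
    by (simp add: min_def)
  also have "\<dots> \<le> real a * (1 - (1 - p) ^ a)"
    using min_le_one_minus_power[OF p] by (intro mult_left_mono) auto
  finally show ?thesis .
qed

lemma prob_deficiency_zero_le_exp: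
  fixes p :: real
  assumes p: "0 \<le> p" "p \<le> 1" and n: "128 \<le> n" and np: "2048 \<le> real n ^ 3 * p"
  shows "prob_deficiency_zero n p \<le> (2 * exp (-2)) ^ n"
proof -
  define a where "a = (n div 3)\<^sup>2"
  obtain A B where AB: "A \<subseteq> C0 n" "B \<subseteq> C0 n" "A \<inter> B = {}" "card A = a" "card B = a"
    unfolding a_def by (rule C0_disjoint_subsets)
  have "real n / 4 \<le> real (n div 3)"
    using n by linarith
  then have "(real n / 4)\<^sup>2 \<le> real a"
    unfolding a_def using n by (simp add: power_mono)
  then have aq: "4 * real n \<le> real a * (1 - (1 - p) ^ a)"
    using mult_one_minus_power_ge[OF p n np] by blast
  have "0 \<le> (1 - p) ^ a"
    using p by simp
  have "prob_deficiency_zero n p \<le> 2 ^ n * ((1 + (1 - p) ^ a) / 2) ^ a"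
    using prob_deficiency_zero_le[OF p AB(1-3)] unfolding AB(4,5) .
  also have "\<dots> \<le> 2 ^ n * exp (real a * ((1 - p) ^ a - 1) / 2)"
    using \<open>0 \<le> (1 - p) ^ a\<close> by (intro mult_left_mono power_half_one_plus_le_exp) simp_all
  also have "\<dots> \<le> 2 ^ n * exp (- 2 * real n)"
    using aq by (intro mult_left_mono) (auto simp: algebra_simps)
  also have "\<dots> = (2 * exp (-2)) ^ n"
    by (simp add: power_mult_distrib exp_of_nat_mult[symmetric])
  finally show ?thesis .
qed

theorem mainTheorem1:
  fixes p :: "nat \<Rightarrow> real"
  assumes "\<And>n. 0 \<le> p n \<and> p n \<le> 1"
    and "filterlim (\<lambda>n. real n ^ 3 * p n) at_top sequentially"
  shows "(\<lambda>n. prob_deficiency_zero n (p n)) \<longlonglongrightarrow> 0"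
proof (rule tendsto_sandwich)
  show "\<forall>\<^sub>F n in sequentially. 0 \<le> prob_deficiency_zero n (p n)"
    using assms(1) by (simp add: prob_deficiency_zero_nonneg)
  have "\<forall>\<^sub>F n in sequentially. 2048 \<le> real n ^ 3 * p n"
    using assms(2) by (simp add: filterlim_at_top)
  moreover have "\<forall>\<^sub>F n in sequentially. 128 \<le> n"
    by (rule eventually_ge_at_top)
  ultimately show "\<forall>\<^sub>F n in sequentially. prob_deficiency_zero n (p n) \<le> (2 * exp (-2)) ^ n"
    by eventually_elim (use assms(1) prob_deficiency_zero_le_exp in blast)
  show "(\<lambda>_. 0) \<longlonglongrightarrow> (0::real)"
    by simp
  have "2 < exp (2::real)"
    using exp_ge_add_one_self[of 2] by simp
  then show "(\<lambda>n. (2 * exp (-2::real)) ^ n) \<longlonglongrightarrow> 0"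
    by (intro LIMSEQ_power_zero) (simp add: exp_minus field_simps)
qed

end
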